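(* Let $H$ be a real or complex Hilbert space of dimension $n$, let $N\ge n$, let $F=\{f_i\}_{i=1}^N$ be a Parseval frame for $H$, and let $\{q_i\}_{i=1}^N$ be a weight number sequence. The following are equivalent: (i) the canonical dual of $F$ is a 1-erasure probabilistic optimal dual of $F$; (ii) the canonical dual of $F$ is a 1-erasure probabilistic spectrally optimal dual of $F$.
   Context: Inner products are linear in the first argument. A frame $F=\{f_i\}_{i=1}^N$ is Parseval if $\sum_i|\langle f,f_i\rangle|^2=\|f\|^2$ for all $f$; its canonical dual is $\{S_F^{-1}f_i\}=\{f_i\}$, where $S_F=\Theta_F^*\Theta_F$. Analysis operator: $\Theta_Ff=(\langle f,f_i\rangle)_i$. Synthesis operator: $\Theta_G^*(c)=\sum_ic_ig_i$. A dual of $F$ is a frame $G=\{g_i\}_{i=1}^N$ with $f=\sum_i\langle f,f_i\rangle g_i=\sum_i\langle f,g_i\rangle f_i$ for all $f$. A probability sequence satisfies $0\le p_i\le1$ and $\sum p_i=1$. Weight numbers: $q_i=\frac{\sum_jp_j}{\sum_jp_j-p_i}\cdot\frac{N-1}{n}$ (assumed well defined). $\mathcal{D}_1^p$ is the set of $N\times N$ diagonal matrices with exactly one nonzero diagonal entry, equal to $q_i$ at $(i,i)$. Two quantities are used: - $d_1^p(F,G)=\max\{\|\Theta_G^*D\Theta_F\|:D\in\mathcal{D}_1^p\}$ (operator norm); - $\mathcal{R}_1^p(F,G)=\max\{\rho(\Theta_G^*D\Theta_F):D\in\mathcal{D}_1^p\}$ ($\rho$ the spectral radius). $G$ is a 1-erasure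 probabilistic optimal dual of $F$ if $d_1^p(F,G)=\inf\{d_1^p(F,G'):G'\text{ a dual of }F\}$. $G$ is a 1-erasure probabilistic spectrally optimal dual of $F$ if $\mathcal{R}_1^p(F,G)=\inf\{\mathcal{R}_1^p(F,G'):G'\text{ a dual of }F\}$. *)

theory Defs
  imports "Jordan_Normal_Form.Spectral_Radius" "Jordan_Normal_Form.Gauss_Jordan_Elimination"
begin

text \<open>The Hilbert space H of dimension n is modelled as the coordinate space K^n
  (K = real or complex), i.e. vectors of carrier_vec n, with the standard inner product,
  linear in the first argument. Frames are indexed by i < N.\<close>

definition hinner :: "'a::{conjugatable_field,real_normed_field} vec \<Rightarrow> 'a vec \<Rightarrow> 'a" where
  "hinner u v = (\<Sum>k<dim_vec u. u $ k * conjugate (v $ k))"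

definition hnorm :: "'a::{conjugatable_field,real_normed_field} vec \<Rightarrow> real" where
  "hnorm v = sqrt (\<Sum>k<dim_vec v. (norm (v $ k))\<^sup>2)"

definition is_frame :: "nat \<Rightarrow> nat \<Rightarrow> (nat \<Rightarrow> 'a::{conjugatable_field,real_normed_field} vec) \<Rightarrow> bool" where
  "is_frame n N F \<longleftrightarrow> (\<forall>i<N. F i \<in> carrier_vec n) \<and>
     (\<exists>A B. 0 < A \<and> A \<le> B \<and> (\<forall>f \<in> carrier_vec n.
        A * (hnorm f)\<^sup>2 \<le> (\<Sum>i<N. (norm (hinner f (F i)))\<^sup>2) \<and>
        (\<Sum>i<N. (norm (hinner f (F i)))\<^sup>2) \<le> B * (hnorm f)\<^sup>2))"

definition is_parseval :: "nat \<Rightarrow> nat \<Rightarrow> (nat \<Rightarrow> 'a::{conjugatable_field,real_normed_field} vec) \<Rightarrow> bool" where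
  "is_parseval n N F \<longleftrightarrow> (\<forall>i<N. F i \<in> carrier_vec n) \<and>
     (\<forall>f \<in> carrier_vec n. (\<Sum>i<N. (norm (hinner f (F i)))\<^sup>2) = (hnorm f)\<^sup>2)"

text \<open>Analysis operator Theta_F f = (hinner f (F i))_i as an N x n matrix;
  synthesis operator Theta_G^* c = sum_i c_i G i as an n x N matrix.\<close>

definition analysis_op :: "nat \<Rightarrow> nat \<Rightarrow> (nat \<Rightarrow> 'a::{conjugatable_field,real_normed_field} vec) \<Rightarrow> 'a mat" where
  "analysis_op n N F = mat N n (\<lambda>(i, k). conjugate (F i $ k))"

definition synthesis_op :: "nat \<Rightarrow> nat \<Rightarrow> (nat \<Rightarrow> 'a::{conjugatable_field,real_normed_field} vec) \<Rightarrow> 'a mat" where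
  "synthesis_op n N G = mat n N (\<lambda>(k, i). G i $ k)"

definition frame_op :: "nat \<Rightarrow> nat \<Rightarrow> (nat \<Rightarrow> 'a::{conjugatable_field,real_normed_field} vec) \<Rightarrow> 'a mat" where
  "frame_op n N F = synthesis_op n N F * analysis_op n N F"

definition canonical_dual :: "nat \<Rightarrow> nat \<Rightarrow> (nat \<Rightarrow> 'a::{conjugatable_field,real_normed_field} vec) \<Rightarrow> nat \<Rightarrow> 'a vec" where
  "canonical_dual n N F i = (case mat_inverse (frame_op n N F) of Some B \<Rightarrow> B *\<^sub>v F i | None \<Rightarrow> F i)"

definition is_dual :: "nat \<Rightarrow> nat \<Rightarrow> (nat \<Rightarrow> 'a::{conjugatable_field,real_normed_field} vec) \<Rightarrow> (nat \<Rightarrow> 'a vec) \<Rightarrow> bool" where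
  "is_dual n N F G \<longleftrightarrow> is_frame n N G \<and>
     (\<forall>f \<in> carrier_vec n. f = synthesis_op n N G *\<^sub>v (analysis_op n N F *\<^sub>v f) \<and>
                          f = synthesis_op n N F *\<^sub>v (analysis_op n N G *\<^sub>v f))"

definition is_prob_seq :: "nat \<Rightarrow> (nat \<Rightarrow> real) \<Rightarrow> bool" where
  "is_prob_seq N p \<longleftrightarrow> (\<forall>i<N. 0 \<le> p i \<and> p i \<le> 1) \<and> (\<Sum>i<N. p i) = 1"

definition weight_num :: "nat \<Rightarrow> nat \<Rightarrow> (nat \<Rightarrow> real) \<Rightarrow> nat \<Rightarrow> real" where
  "weight_num n N p i = (\<Sum>j<N. p j) / ((\<Sum>j<N. p j) - p i) * ((real N - 1) / real n)"

definition erasure_mats :: "nat \<Rightarrow> nat \<Rightarrow> (nat \<Rightarrow> real) \<Rightarrow> 'a::{conjugatable_field,real_normed_field} mat set" where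
  "erasure_mats n N p = {mat N N (\<lambda>(j, k). if j = i \<and> k = i then of_real (weight_num n N p i) else 0) | i. i < N}"

definition op_norm :: "nat \<Rightarrow> 'a::{conjugatable_field,real_normed_field} mat \<Rightarrow> real" where
  "op_norm n A = Sup {hnorm (A *\<^sub>v v) | v. v \<in> carrier_vec n \<and> hnorm v \<le> 1}"

definition d1p :: "nat \<Rightarrow> nat \<Rightarrow> (nat \<Rightarrow> real) \<Rightarrow> (nat \<Rightarrow> 'a::{conjugatable_field,real_normed_field} vec) \<Rightarrow> (nat \<Rightarrow> 'a vec) \<Rightarrow> real" where
  "d1p n N p F G = Max ((\<lambda>D. op_norm n (synthesis_op n N G * D * analysis_op n N F)) ` erasure_mats n N p)"

text \<open>rho is the spectral radius on n x n matrices over the scalar field.\<close>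
definition R1p :: "('a mat \<Rightarrow> real) \<Rightarrow> nat \<Rightarrow> nat \<Rightarrow> (nat \<Rightarrow> real) \<Rightarrow> (nat \<Rightarrow> 'a::{conjugatable_field,real_normed_field} vec) \<Rightarrow> (nat \<Rightarrow> 'a vec) \<Rightarrow> real" where
  "R1p rho n N p F G = Max ((\<lambda>D. rho (synthesis_op n N G * D * analysis_op n N F)) ` erasure_mats n N p)"

definition prob_optimal_dual :: "nat \<Rightarrow> nat \<Rightarrow> (nat \<Rightarrow> real) \<Rightarrow> (nat \<Rightarrow> 'a::{conjugatable_field,real_normed_field} vec) \<Rightarrow> (nat \<Rightarrow> 'a vec) \<Rightarrow> bool" where
  "prob_optimal_dual n N p F G \<longleftrightarrow> is_dual n N F G \<and>
     d1p n N p F G = Inf {d1p n N p F G' | G'. is_dual n N F G'}"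

definition prob_spec_optimal_dual :: "('a mat \<Rightarrow> real) \<Rightarrow> nat \<Rightarrow> nat \<Rightarrow> (nat \<Rightarrow> real) \<Rightarrow> (nat \<Rightarrow> 'a::{conjugatable_field,real_normed_field} vec) \<Rightarrow> (nat \<Rightarrow> 'a vec) \<Rightarrow> bool" where
  "prob_spec_optimal_dual rho n N p F G \<longleftrightarrow> is_dual n N F G \<and>
     R1p rho n N p F G = Inf {R1p rho n N p F G' | G'. is_dual n N F G'}"

definition real_spectral_radius :: "real mat \<Rightarrow> real" where
  "real_spectral_radius A = spectral_radius (map_mat complex_of_real A)"

end

theory Submission
  imports Defs "HOL-Analysis.L2_Norm"
begin

(* For a Parseval frame F the frame operator is the identity, so the canonical dual is F itself.
   Each erasure operator Theta_G^* D_i Theta_F equals q_i G_i F_i^*, which has rank one; hence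
   d_1^p(F, G) = max_i |q_i| |G_i| |F_i| and R_1^p(F, G) = max_i |q_i| |<G_i, F_i>|, and both equal
   M = max_i |q_i| |F_i|^2 for G = F.  As R_1^p <= d_1^p, spectral optimality of F implies
   optimality.  Conversely, if some dual G had R_1^p(F, G) < M, then the duals F + t (G - F) for
   small t > 0 would beat F in d_1^p: at an index attaining M we have Re <G_i, F_i> < |F_i|^2, so
   the norm of F_i + t (G_i - F_i) drops below |F_i| to first order, and at every other index the
   weighted norm stays below M by continuity. *)

section \<open>Scalars with a conjugation\<close>

text \<open>The one axiom already forces conjugation to fix the reals and to preserve the norm.\<close>
class hilbert_scalar = conjugatable_field + real_normed_field +
  assumes mult_conjugate_self_scaleR: "z * conjugate z = (norm z)\<^sup>2 *\<^sub>R 1"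

instance real :: hilbert_scalar
  by standard (simp add: power2_eq_square)

instance complex :: hilbert_scalar
  by standard (simp add: complex_norm_square[symmetric] scaleR_conv_of_real)

lemma mult_conjugate_self: "(z::'a::hilbert_scalar) * conjugate z = of_real ((norm z)\<^sup>2 :: real)"
  by (simp add: mult_conjugate_self_scaleR of_real_def)

lemma conjugate_of_real [simp]: "conjugate (of_real r :: 'a::hilbert_scalar) = of_real r"
proof (cases "r = 0")
  case False
  have "of_real r * conjugate (of_real r :: 'a) = of_real r * of_real r"
    unfolding mult_conjugate_self by (simp add: power2_eq_square)
  with False show ?thesis by simp
qed simp

lemma conjugate_one [simp]: "conjugate (1 :: 'a::hilbert_scalar) = 1"
  using conjugate_of_real[of 1, where 'a='a] by simp

lemma conjugate_diff: "conjugate (a - b :: 'a::conjugatable_ring) = conjugate a - conjugate b"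
  using conjugate_dist_add[of a "- b"] by (simp add: conjugate_neg)

lemma norm_conjugate [simp]: "norm (conjugate (z::'a::hilbert_scalar)) = norm z"
proof -
  have "(of_real ((norm (conjugate z))\<^sup>2) :: 'a) = of_real ((norm z)\<^sup>2)"
    by (metis mult_conjugate_self conjugate_id mult.commute)
  then have "(norm (conjugate z))\<^sup>2 = (norm z)\<^sup>2"
    by (simp only: of_real_eq_iff)
  then show ?thesis by (simp add: power2_eq_iff_nonneg)
qed

section \<open>The standard inner product\<close>

lemma power2_hnorm: "(hnorm v)\<^sup>2 = (\<Sum>k<dim_vec v. (norm (v $ k))\<^sup>2)"
  unfolding hnorm_def by (simp add: sum_nonneg)

lemma hnorm_nonneg [simp]: "0 \<le> hnorm v"
  unfolding hnorm_def by (simp add: sum_nonneg)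

lemma hnorm_eq_L2_set: "hnorm v = L2_set (\<lambda>k. norm (v $ k)) {..<dim_vec v}"
  unfolding hnorm_def L2_set_def by simp

lemma hinner_self: "hinner v (v :: 'a::hilbert_scalar vec) = of_real ((hnorm v)\<^sup>2)"
  unfolding hinner_def power2_hnorm by (simp add: mult_conjugate_self)

lemma hnorm_eq_0_iff:
  assumes "v \<in> carrier_vec n"
  shows "hnorm v = 0 \<longleftrightarrow> v = 0\<^sub>v n"
  using assms unfolding hnorm_def
  by (auto simp: sum_nonneg_eq_0_iff vec_eq_iff)

lemma hinner_commute:
  "dim_vec u = dim_vec v \<Longrightarrow> hinner v u = conjugate (hinner u (v :: 'a::hilbert_scalar vec))"
  unfolding hinner_def by (simp add: sum_conjugate conjugate_dist_mul mult.commute)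

lemma norm_hinner_le:
  assumes "dim_vec u = dim_vec v"
  shows "norm (hinner u (v :: 'a::hilbert_scalar vec)) \<le> hnorm u * hnorm v"
proof -
  have "norm (hinner u v) \<le> (\<Sum>k<dim_vec u. norm (u $ k) * norm (v $ k))"
    unfolding hinner_def by (rule order.trans[OF norm_sum]) (simp add: norm_mult)
  also have "\<dots> \<le> L2_set (\<lambda>k. norm (u $ k)) {..<dim_vec u} * L2_set (\<lambda>k. norm (v $ k)) {..<dim_vec u}"
    using L2_set_mult_ineq[of "\<lambda>k. norm (u $ k)" "\<lambda>k. norm (v $ k)"] by simp
  finally show ?thesis using assms by (simp add: hnorm_eq_L2_set)
qed

lemma hinner_add_left:
  "u \<in> carrier_vec n \<Longrightarrow> v \<in> carrier_vec n \<Longrightarrow> hinner (u + v) w = hinner u w + hinner v w"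
  unfolding hinner_def by (simp add: sum.distrib distrib_right)

lemma hinner_add_right:
  "u \<in> carrier_vec n \<Longrightarrow> v \<in> carrier_vec n \<Longrightarrow> w \<in> carrier_vec n \<Longrightarrow>
    hinner w (u + v) = hinner w u + hinner w v"
  unfolding hinner_def by (simp add: sum.distrib distrib_left conjugate_dist_add)

lemma hinner_minus_left:
  "u \<in> carrier_vec n \<Longrightarrow> v \<in> carrier_vec n \<Longrightarrow> hinner (u - v) w = hinner u w - hinner v w"
  unfolding hinner_def by (simp add: sum_subtractf left_diff_distrib)

lemma hinner_minus_right:
  "u \<in> carrier_vec n \<Longrightarrow> v \<in> carrier_vec n \<Longrightarrow> w \<in> carrier_vec n \<Longrightarrow>
    hinner w (u - v) = hinner w u - hinner w v"
  unfolding hinner_def by (simp add: sum_subtractf right_diff_distrib conjugate_diff)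

lemma hnorm_smult: "hnorm (c \<cdot>\<^sub>v g) = norm c * hnorm g"
  unfolding hnorm_def by (simp add: norm_mult power_mult_distrib sum_distrib_left[symmetric] real_sqrt_mult)

lemma hinner_smult_left: "hinner (c \<cdot>\<^sub>v g) f = c * hinner g f"
  unfolding hinner_def by (simp add: sum_distrib_left mult_ac)

lemma hinner_mult_mat_vec_hermitian:
  fixes A :: "'a::hilbert_scalar mat"
  assumes A: "A \<in> carrier_mat n n"
    and herm: "\<And>k l. k < n \<Longrightarrow> l < n \<Longrightarrow> conjugate (A $$ (k, l)) = A $$ (l, k)"
    and u: "u \<in> carrier_vec n" and w: "w \<in> carrier_vec n"
  shows "hinner (A *\<^sub>v u) w = hinner u (A *\<^sub>v w)"
proof -
  have "hinner (A *\<^sub>v u) w = (\<Sum>k<n. \<Sum>l<n. A $$ (k, l) * u $ l * conjugate (w $ k))"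
    using A u by (simp add: hinner_def scalar_prod_def atLeast0LessThan sum_distrib_right)
  also have "\<dots> = (\<Sum>l<n. \<Sum>k<n. u $ l * conjugate (A $$ (l, k) * w $ k))"
    by (subst sum.swap) (simp add: herm conjugate_dist_mul mult_ac)
  also have "\<dots> = hinner u (A *\<^sub>v w)"
    using A u w by (simp add: hinner_def scalar_prod_def atLeast0LessThan sum_distrib_left sum_conjugate)
  finally show ?thesis .
qed

text \<open>Expanding the form at \<open>u + A u\<close> leaves \<open>2 \<parallel>A u\<parallel>\<^sup>2 = 0\<close>.\<close>
lemma hermitian_mat_eq_0_if_form_0:
  fixes A :: "'a::hilbert_scalar mat"
  assumes A: "A \<in> carrier_mat n n"
    and herm: "\<And>k l. k < n \<Longrightarrow> l < n \<Longrightarrow> conjugate (A $$ (k, l)) = A $$ (l, k)"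
    and form: "\<And>f. f \<in> carrier_vec n \<Longrightarrow> hinner (A *\<^sub>v f) f = 0"
  shows "A = 0\<^sub>m n n"
proof -
  have Au: "A *\<^sub>v u = 0\<^sub>v n" if u: "u \<in> carrier_vec n" for u
  proof -
    define v where "v = A *\<^sub>v u"
    have v: "v \<in> carrier_vec n" unfolding v_def using A u by simp
    have "0 = hinner (A *\<^sub>v (u + v)) (u + v)" using form u v by simp
    also have "\<dots> = hinner (A *\<^sub>v u) u + hinner (A *\<^sub>v u) v + hinner (A *\<^sub>v v) u + hinner (A *\<^sub>v v) v"
      using A u v mult_mat_vec_carrier[OF A u] mult_mat_vec_carrier[OF A v]
      by (simp add: mult_add_distrib_mat_vec hinner_add_left[of _ n] hinner_add_right)
    also have "hinner (A *\<^sub>v v) u = hinner v v"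
      using hinner_mult_mat_vec_hermitian[OF A herm v u] v_def by simp
    finally have "2 * hinner v v = 0" using form u v v_def by simp
    then have "hnorm v = 0" by (simp add: hinner_self)
    then show ?thesis using hnorm_eq_0_iff[OF v] v_def by simp
  qed
  show ?thesis
  proof (rule eq_matI)
    fix k l assume kl: "k < dim_row (0\<^sub>m n n :: 'a mat)" "l < dim_col (0\<^sub>m n n :: 'a mat)"
    have "A $$ (k, l) = (A *\<^sub>v unit_vec n l) $ k" using A kl by simp
    then show "A $$ (k, l) = 0\<^sub>m n n $$ (k, l)" using Au[of "unit_vec n l"] kl by simp
  qed (use A in auto)
qed

section \<open>Parseval frames and their duals\<close>

lemma analysis_op_carrier [simp]: "analysis_op n N F \<in> carrier_mat N n"
  by (simp add: analysis_op_def)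

lemma synthesis_op_carrier [simp]: "synthesis_op n N G \<in> carrier_mat n N"
  by (simp add: synthesis_op_def)

lemma synthesis_analysis_mult_vec:
  assumes "f \<in> carrier_vec n"
  shows "synthesis_op n N G *\<^sub>v (analysis_op n N F *\<^sub>v f) = vec n (\<lambda>k. \<Sum>i<N. hinner f (F i) * G i $ k)"
  using assms
  by (auto intro!: eq_vecI sum.cong simp: synthesis_op_def analysis_op_def scalar_prod_def hinner_def
      atLeast0LessThan mult.commute)

lemma reconstructs_iff:
  assumes "f \<in> carrier_vec n"
  shows "f = synthesis_op n N G *\<^sub>v (analysis_op n N F *\<^sub>v f) \<longleftrightarrow>
    (\<forall>k<n. f $ k = (\<Sum>i<N. hinner f (F i) * G i $ k))"
  using assms by (auto simp: synthesis_analysis_mult_vec vec_eq_iff)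

lemma hinner_synthesis_analysis:
  assumes f: "f \<in> carrier_vec n" and G: "\<forall>i<N. G i \<in> carrier_vec n"
  shows "hinner (synthesis_op n N G *\<^sub>v (analysis_op n N F *\<^sub>v f)) f
    = (\<Sum>i<N. hinner f (F i) * hinner (G i) (f :: 'a::hilbert_scalar vec))"
proof -
  have "hinner (synthesis_op n N G *\<^sub>v (analysis_op n N F *\<^sub>v f)) f
      = (\<Sum>k<n. \<Sum>i<N. hinner f (F i) * (G i $ k * conjugate (f $ k)))"
    using f by (simp add: synthesis_analysis_mult_vec hinner_def sum_distrib_right mult.assoc)
  also have "\<dots> = (\<Sum>i<N. hinner f (F i) * hinner (G i) f)"
    using G by (subst sum.swap) (auto intro!: sum.cong simp: hinner_def sum_distrib_left)
  finally show ?thesis .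
qed

lemma hinner_frame_op:
  fixes F :: "nat \<Rightarrow> 'a::hilbert_scalar vec"
  assumes f: "f \<in> carrier_vec n" and F: "\<forall>i<N. F i \<in> carrier_vec n"
  shows "hinner (frame_op n N F *\<^sub>v f) f = of_real (\<Sum>i<N. (norm (hinner f (F i)))\<^sup>2)"
proof -
  have conj: "hinner (F i) f = conjugate (hinner f (F i))" if "i < N" for i
    using F f that by (intro hinner_commute) auto
  have "frame_op n N F *\<^sub>v f = synthesis_op n N F *\<^sub>v (analysis_op n N F *\<^sub>v f)"
    unfolding frame_op_def using f by (simp add: assoc_mult_mat_vec[of _ n N _ n])
  then have "hinner (frame_op n N F *\<^sub>v f) f = (\<Sum>i<N. hinner f (F i) * conjugate (hinner f (F i)))"
    using F f conj by (simp add: hinner_synthesis_analysis)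
  then show ?thesis by (simp add: mult_conjugate_self)
qed

lemma frame_op_parseval:
  fixes F :: "nat \<Rightarrow> 'a::hilbert_scalar vec"
  assumes P: "is_parseval n N F"
  shows "frame_op n N F = 1\<^sub>m n"
proof -
  have F: "\<forall>i<N. F i \<in> carrier_vec n" using P unfolding is_parseval_def by simp
  have S: "frame_op n N F \<in> carrier_mat n n"
    unfolding frame_op_def by (rule mult_carrier_mat[OF synthesis_op_carrier analysis_op_carrier])
  have entry: "frame_op n N F $$ (k, l) = (\<Sum>i<N. F i $ k * conjugate (F i $ l))"
    if "k < n" "l < n" for k l
    using that by (simp add: frame_op_def synthesis_op_def analysis_op_def scalar_prod_def atLeast0LessThan)
  have zero: "frame_op n N F - 1\<^sub>m n = 0\<^sub>m n n"
  proof (rule hermitian_mat_eq_0_if_form_0)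
    show "conjugate ((frame_op n N F - 1\<^sub>m n) $$ (k, l)) = (frame_op n N F - 1\<^sub>m n) $$ (l, k)"
      if "k < n" "l < n" for k l
      using that S by (auto simp: entry sum_conjugate conjugate_dist_mul conjugate_diff mult.commute)
    show "hinner ((frame_op n N F - 1\<^sub>m n) *\<^sub>v f) f = 0" if f: "f \<in> carrier_vec n" for f
      using P f S F unfolding is_parseval_def
      by (simp add: minus_mult_distrib_mat_vec hinner_minus_left[of _ n] hinner_frame_op hinner_self)
  qed (use S in auto)
  show ?thesis
  proof (rule eq_matI)
    fix k l assume kl: "k < dim_row (1\<^sub>m n :: 'a mat)" "l < dim_col (1\<^sub>m n :: 'a mat)"
    then have "(frame_op n N F - 1\<^sub>m n) $$ (k, l) = 0" using zero by simp
    then show "frame_op n N F $$ (k, l) = 1\<^sub>m n $$ (k, l)" using S kl by simp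
  qed (use S in auto)
qed

lemma parseval_reconstructs:
  fixes F :: "nat \<Rightarrow> 'a::hilbert_scalar vec"
  assumes P: "is_parseval n N F" and f: "f \<in> carrier_vec n"
  shows "f = synthesis_op n N F *\<^sub>v (analysis_op n N F *\<^sub>v f)"
proof -
  have "synthesis_op n N F *\<^sub>v (analysis_op n N F *\<^sub>v f) = frame_op n N F *\<^sub>v f"
    unfolding frame_op_def using f by (simp add: assoc_mult_mat_vec[of _ n N _ n])
  then show ?thesis using frame_op_parseval[OF P] f by simp
qed

lemma canonical_dual_parseval:
  fixes F :: "nat \<Rightarrow> 'a::hilbert_scalar vec"
  assumes P: "is_parseval n N F" and i: "i < N"
  shows "canonical_dual n N F i = F i"
proof (cases "mat_inverse (frame_op n N F)")
  case (Some B)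
  have "1\<^sub>m n * B = 1\<^sub>m n" "B \<in> carrier_mat n n"
    using mat_inverse(2)[OF _ Some, of n] frame_op_parseval[OF P] by auto
  then have "B = 1\<^sub>m n" by simp
  moreover have "F i \<in> carrier_vec n" using P i unfolding is_parseval_def by simp
  ultimately show ?thesis unfolding canonical_dual_def Some by simp
qed (simp add: canonical_dual_def)

lemma sum_norm_hinner_le:
  fixes G :: "nat \<Rightarrow> 'a::hilbert_scalar vec"
  assumes f: "f \<in> carrier_vec n" and G: "\<forall>i<N. G i \<in> carrier_vec n"
  shows "(\<Sum>i<N. (norm (hinner f (G i)))\<^sup>2) \<le> (\<Sum>i<N. (hnorm (G i))\<^sup>2) * (hnorm f)\<^sup>2"
proof -
  have "(norm (hinner f (G i)))\<^sup>2 \<le> (hnorm (G i))\<^sup>2 * (hnorm f)\<^sup>2" if "i < N" for i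
  proof -
    have "norm (hinner f (G i)) \<le> hnorm f * hnorm (G i)" using f G that by (intro norm_hinner_le) auto
    then show ?thesis by (simp add: power_mono power_mult_distrib[symmetric] mult.commute)
  qed
  then show ?thesis unfolding sum_distrib_right by (intro sum_mono) simp
qed

lemma hnorm_le_if_reconstructs:
  fixes F G :: "nat \<Rightarrow> 'a::hilbert_scalar vec"
  assumes P: "is_parseval n N F" and G: "\<forall>i<N. G i \<in> carrier_vec n"
    and f: "f \<in> carrier_vec n" and R: "f = synthesis_op n N F *\<^sub>v (analysis_op n N G *\<^sub>v f)"
  shows "(hnorm f)\<^sup>2 \<le> (\<Sum>i<N. (norm (hinner f (G i)))\<^sup>2)"
proof -
  define X where "X = (\<Sum>i<N. (norm (hinner f (G i)))\<^sup>2)"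
  have F: "\<forall>i<N. F i \<in> carrier_vec n" using P unfolding is_parseval_def by simp
  have conj: "hinner (F i) f = conjugate (hinner f (F i))" if "i < N" for i
    using F f that by (intro hinner_commute) auto
  have "(hnorm f)\<^sup>2 = norm (hinner f f)" by (simp add: hinner_self norm_power)
  also have "hinner f f = (\<Sum>i<N. hinner f (G i) * hinner (F i) f)"
    using hinner_synthesis_analysis[OF f F, of G] R by simp
  also have "norm \<dots> \<le> (\<Sum>i<N. norm (hinner f (G i)) * norm (hinner f (F i)))"
    by (intro order.trans[OF norm_sum] sum_mono) (simp add: norm_mult conj)
  also have "\<dots> \<le> L2_set (\<lambda>i. norm (hinner f (G i))) {..<N} * L2_set (\<lambda>i. norm (hinner f (F i))) {..<N}"
    using L2_set_mult_ineq[of "\<lambda>i. norm (hinner f (G i))" "\<lambda>i. norm (hinner f (F i))"] by simp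
  also have "\<dots> = sqrt X * hnorm f"
    using P f unfolding is_parseval_def L2_set_def X_def by simp
  finally have "(hnorm f)\<^sup>2 \<le> sqrt X * hnorm f" .
  moreover have X0: "0 \<le> X" unfolding X_def by (simp add: sum_nonneg)
  ultimately have "hnorm f \<le> sqrt X"
    using hnorm_nonneg[of f] mult_right_le_imp_le[of "hnorm f" "hnorm f" "sqrt X"]
    by (cases "hnorm f = 0") (simp_all add: power2_eq_square)
  then have "(hnorm f)\<^sup>2 \<le> (sqrt X)\<^sup>2" by (simp add: power_mono)
  then show ?thesis using X0 unfolding X_def by simp
qed

lemma is_frame_if_reconstructs:
  fixes F G :: "nat \<Rightarrow> 'a::hilbert_scalar vec"
  assumes P: "is_parseval n N F" and G: "\<forall>i<N. G i \<in> carrier_vec n"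
    and R: "\<forall>f\<in>carrier_vec n. f = synthesis_op n N F *\<^sub>v (analysis_op n N G *\<^sub>v f)"
  shows "is_frame n N G"
  unfolding is_frame_def
proof (intro conjI exI ballI)
  show "0 < (1::real)" "1 \<le> 1 + (\<Sum>i<N. (hnorm (G i))\<^sup>2)" by (simp_all add: sum_nonneg)
  fix f :: "'a vec" assume f: "f \<in> carrier_vec n"
  show "1 * (hnorm f)\<^sup>2 \<le> (\<Sum>i<N. (norm (hinner f (G i)))\<^sup>2)"
    using hnorm_le_if_reconstructs[OF P G f] R f by simp
  have "(\<Sum>i<N. (norm (hinner f (G i)))\<^sup>2) \<le> (\<Sum>i<N. (hnorm (G i))\<^sup>2) * (hnorm f)\<^sup>2"
    by (rule sum_norm_hinner_le[OF f G])
  also have "\<dots> \<le> (1 + (\<Sum>i<N. (hnorm (G i))\<^sup>2)) * (hnorm f)\<^sup>2"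
    by (simp add: mult_right_mono)
  finally show "(\<Sum>i<N. (norm (hinner f (G i)))\<^sup>2) \<le> (1 + (\<Sum>i<N. (hnorm (G i))\<^sup>2)) * (hnorm f)\<^sup>2" .
qed (use G in simp)

lemma is_dual_carrier: "is_dual n N F G \<Longrightarrow> i < N \<Longrightarrow> G i \<in> carrier_vec n"
  unfolding is_dual_def is_frame_def by simp

lemma is_dual_coords:
  assumes "is_dual n N F G" and "f \<in> carrier_vec n" and "k < n"
  shows "f $ k = (\<Sum>i<N. hinner f (F i) * G i $ k)"
    and "f $ k = (\<Sum>i<N. hinner f (G i) * F i $ k)"
  using assms reconstructs_iff[OF assms(2)] unfolding is_dual_def by blast+

lemma is_dual_cong:
  assumes "\<And>i. i < N \<Longrightarrow> G i = G' i"
  shows "is_dual n N F G = is_dual n N F G'"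
proof -
  have "synthesis_op n N G = synthesis_op n N G'" "analysis_op n N G = analysis_op n N G'"
    using assms by (auto simp: synthesis_op_def analysis_op_def intro!: eq_matI)
  moreover have "is_frame n N G = is_frame n N G'" using assms unfolding is_frame_def by simp
  ultimately show ?thesis unfolding is_dual_def by simp
qed

lemma parseval_is_dual_self:
  fixes F :: "nat \<Rightarrow> 'a::hilbert_scalar vec"
  assumes P: "is_parseval n N F"
  shows "is_dual n N F F"
proof -
  have F: "\<forall>i<N. F i \<in> carrier_vec n" using P unfolding is_parseval_def by simp
  show ?thesis
    using is_frame_if_reconstructs[OF P F] parseval_reconstructs[OF P] unfolding is_dual_def by simp
qed

lemma is_dual_affine_comb:
  fixes F G H :: "nat \<Rightarrow> 'a::hilbert_scalar vec"
  assumes P: "is_parseval n N F" and G: "is_dual n N F G" and H: "is_dual n N F H"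
  shows "is_dual n N F (\<lambda>i. G i + of_real t \<cdot>\<^sub>v (H i - G i))"
proof -
  define K where "K i = G i + of_real t \<cdot>\<^sub>v (H i - G i)" for i
  have Gc: "G i \<in> carrier_vec n" and Hc: "H i \<in> carrier_vec n" if "i < N" for i
    using that is_dual_carrier[OF G] is_dual_carrier[OF H] by auto
  have Kc: "\<forall>i<N. K i \<in> carrier_vec n" unfolding K_def using Gc Hc by simp
  have K_index: "K i $ k = G i $ k + of_real t * (H i $ k - G i $ k)" if "i < N" "k < n" for i k
    unfolding K_def using that Gc[OF that(1)] Hc[OF that(1)] by simp
  have hinner_K: "hinner f (K i) = hinner f (G i) + of_real t * (hinner f (H i) - hinner f (G i))"
    if "f \<in> carrier_vec n" "i < N" for f i
    using that Gc[OF that(2)] Hc[OF that(2)] unfolding hinner_def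
    by (simp add: K_index conjugate_dist_add conjugate_dist_mul conjugate_diff algebra_simps
        sum.distrib sum_subtractf sum_distrib_left)
  have K_synthesis: "f = synthesis_op n N K *\<^sub>v (analysis_op n N F *\<^sub>v f)" if f: "f \<in> carrier_vec n" for f
  proof -
    have "(\<Sum>i<N. hinner f (F i) * K i $ k) = (\<Sum>i<N. hinner f (F i) * G i $ k)
        + of_real t * ((\<Sum>i<N. hinner f (F i) * H i $ k) - (\<Sum>i<N. hinner f (F i) * G i $ k))"
      if "k < n" for k
      using that by (simp add: K_index sum.distrib sum_subtractf sum_distrib_left algebra_simps)
    then show ?thesis
      unfolding reconstructs_iff[OF f] using is_dual_coords(1)[OF G f] is_dual_coords(1)[OF H f] by simp
  qed
  have K_analysis: "f = synthesis_op n N F *\<^sub>v (analysis_op n N K *\<^sub>v f)" if f: "f \<in> carrier_vec n" for f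
  proof -
    have "(\<Sum>i<N. hinner f (K i) * F i $ k) = (\<Sum>i<N. hinner f (G i) * F i $ k)
        + of_real t * ((\<Sum>i<N. hinner f (H i) * F i $ k) - (\<Sum>i<N. hinner f (G i) * F i $ k))"
      for k
      using f by (simp add: hinner_K sum.distrib sum_subtractf sum_distrib_left algebra_simps)
    then show ?thesis
      unfolding reconstructs_iff[OF f] using is_dual_coords(2)[OF G f] is_dual_coords(2)[OF H f] by simp
  qed
  have "is_dual n N F K"
    unfolding is_dual_def using is_frame_if_reconstructs[OF P Kc] K_synthesis K_analysis by simp
  then show ?thesis unfolding K_def .
qed

section \<open>Rank-one erasure operators\<close>

definition rank_one_mat :: "nat \<Rightarrow> 'a::conjugatable_ring vec \<Rightarrow> 'a vec \<Rightarrow> 'a mat" where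
  "rank_one_mat n g f = mat n n (\<lambda>(k, l). g $ k * conjugate (f $ l))"

lemma rank_one_mat_dim [simp]:
  "dim_row (rank_one_mat n g f) = n" "dim_col (rank_one_mat n g f) = n"
  by (simp_all add: rank_one_mat_def)

lemma rank_one_mat_carrier [simp]: "rank_one_mat n g f \<in> carrier_mat n n"
  by (simp add: carrier_matI)

lemma erasure_term_eq_rank_one:
  assumes i: "i < N" and G: "G i \<in> carrier_vec n"
  shows "synthesis_op n N G * mat N N (\<lambda>(j, k). if j = i \<and> k = i then c else 0) * analysis_op n N F
    = rank_one_mat n (c \<cdot>\<^sub>v G i) (F i)"
proof -
  have "synthesis_op n N G * mat N N (\<lambda>(j, k). if j = i \<and> k = i then c else 0)
      = mat n N (\<lambda>(k, j). if j = i then G i $ k * c else 0)"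
    using i by (intro eq_matI) (auto simp: synthesis_op_def scalar_prod_def if_distrib cong: if_cong)
  then show ?thesis
    using i G by (intro eq_matI) (auto simp: rank_one_mat_def analysis_op_def scalar_prod_def
        if_distrib if_distribR mult_ac cong: if_cong)
qed

lemma rank_one_mult_vec:
  "g \<in> carrier_vec n \<Longrightarrow> v \<in> carrier_vec n \<Longrightarrow> rank_one_mat n g f *\<^sub>v v = hinner v f \<cdot>\<^sub>v g"
  by (auto intro!: eq_vecI simp: rank_one_mat_def scalar_prod_def hinner_def atLeast0LessThan
      sum_distrib_left sum_distrib_right mult_ac)

lemma op_norm_rank_one:
  fixes f g :: "'a::hilbert_scalar vec"
  assumes g: "g \<in> carrier_vec n" and f: "f \<in> carrier_vec n"
  shows "op_norm n (rank_one_mat n g f) = hnorm g * hnorm f"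
proof -
  have image: "hnorm (rank_one_mat n g f *\<^sub>v v) = norm (hinner v f) * hnorm g" if "v \<in> carrier_vec n" for v
    using that g by (simp add: rank_one_mult_vec hnorm_smult)
  define S where "S = {hnorm (rank_one_mat n g f *\<^sub>v v) | v. v \<in> carrier_vec n \<and> hnorm v \<le> 1}"
  have upper: "x \<le> hnorm g * hnorm f" if "x \<in> S" for x
  proof -
    obtain v where v: "v \<in> carrier_vec n" "hnorm v \<le> 1" and x: "x = norm (hinner v f) * hnorm g"
      using \<open>x \<in> S\<close> image unfolding S_def by auto
    have "norm (hinner v f) \<le> hnorm v * hnorm f" using v f by (intro norm_hinner_le) auto
    also have "\<dots> \<le> hnorm f" using v(2) by (simp add: mult_left_le_one_le)
    finally have "norm (hinner v f) \<le> hnorm f" .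
    then show ?thesis unfolding x by (metis hnorm_nonneg mult.commute mult_right_mono)
  qed
  have attained: "hnorm g * hnorm f \<in> S"
  proof (cases "hnorm f = 0")
    case True
    then show ?thesis
      unfolding S_def using image[of "0\<^sub>v n"] by (intro CollectI exI[of _ "0\<^sub>v n"]) (auto simp: hnorm_def hinner_def)
  next
    case False
    define v where "v = of_real (1 / hnorm f) \<cdot>\<^sub>v f"
    have v: "v \<in> carrier_vec n" "hnorm v = 1" unfolding v_def using f False hnorm_nonneg[of f]
      by (simp_all add: hnorm_smult norm_divide)
    have "hinner v f = of_real (hnorm f)"
      unfolding v_def using False by (simp add: hinner_smult_left hinner_self power2_eq_square)
    then have "hnorm (rank_one_mat n g f *\<^sub>v v) = hnorm g * hnorm f" by (simp add: image[OF v(1)])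
    then show ?thesis unfolding S_def using v by (intro CollectI exI[of _ v]) simp
  qed
  show ?thesis unfolding op_norm_def S_def[symmetric] by (rule cSup_eq_maximum[OF attained upper])
qed

text \<open>Pairing the eigenvalue equation with \<open>f\<close> turns it into the scalar equation
  \<open>\<mu> \<langle>v, f\<rangle> = \<langle>v, f\<rangle> \<langle>g, f\<rangle>\<close>.\<close>
lemma eigenvalue_rank_one:
  fixes g f :: "'a::hilbert_scalar vec"
  assumes g: "g \<in> carrier_vec n" and ev: "eigenvalue (rank_one_mat n g f) \<mu>"
  shows "\<mu> = 0 \<or> \<mu> = hinner g f"
proof -
  obtain v where v: "v \<in> carrier_vec n" "v \<noteq> 0\<^sub>v n" and eq: "hinner v f \<cdot>\<^sub>v g = \<mu> \<cdot>\<^sub>v v"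
    using ev g unfolding eigenvalue_def eigenvector_def by (auto simp: rank_one_mult_vec)
  have "\<mu> * hinner v f = hinner v f * hinner g f"
    using arg_cong[OF eq, of "\<lambda>w. hinner w f"] unfolding hinner_smult_left by (rule sym)
  then have "hinner v f = 0 \<or> \<mu> = hinner g f" by (auto simp: mult.commute)
  moreover have "\<mu> = 0" if "hinner v f = 0"
  proof -
    obtain k where "k < n" "v $ k \<noteq> 0" using v by (auto simp: vec_eq_iff)
    moreover have "0 = \<mu> * v $ k"
      using arg_cong[OF eq, of "\<lambda>w. w $ k"] that g v \<open>k < n\<close> by simp
    ultimately show ?thesis by simp
  qed
  ultimately show ?thesis by auto
qed

lemma eigenvalue_rank_one_hinner:
  fixes g f :: "'a::hilbert_scalar vec"
  assumes g: "g \<in> carrier_vec n" and nz: "hinner g f \<noteq> 0"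
  shows "eigenvalue (rank_one_mat n g f) (hinner g f)"
proof -
  have "g \<noteq> 0\<^sub>v n" using nz by (auto simp: hinner_def)
  then show ?thesis
    using g unfolding eigenvalue_def eigenvector_def by (intro exI[of _ g]) (simp add: rank_one_mult_vec)
qed

lemma spectral_radius_rank_one:
  fixes g f :: "complex vec"
  assumes n: "0 < n" and g: "g \<in> carrier_vec n"
  shows "spectral_radius (rank_one_mat n g f) = cmod (hinner g f)"
proof (rule antisym)
  obtain \<mu> where "eigenvalue (rank_one_mat n g f) \<mu>" "spectral_radius (rank_one_mat n g f) = cmod \<mu>"
    using spectral_radius_mem_max(1)[OF rank_one_mat_carrier n] unfolding spectrum_def by auto
  then show "spectral_radius (rank_one_mat n g f) \<le> cmod (hinner g f)"
    using eigenvalue_rank_one[OF g] by fastforce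
  show "cmod (hinner g f) \<le> spectral_radius (rank_one_mat n g f)"
  proof (cases "hinner g f = 0")
    case False
    then show ?thesis using spectral_radius_mem_max(2)[OF rank_one_mat_carrier n]
      eigenvalue_rank_one_hinner[OF g False] unfolding spectrum_def by auto
  qed (use spectral_radius_mem_max(1)[OF rank_one_mat_carrier[of n g f] n] in force)
qed

lemma real_spectral_radius_rank_one:
  fixes g f :: "real vec"
  assumes n: "0 < n" and g: "g \<in> carrier_vec n" and f: "f \<in> carrier_vec n"
  shows "real_spectral_radius (rank_one_mat n g f) = norm (hinner g f)"
proof -
  have "map_mat complex_of_real (rank_one_mat n g f)
      = rank_one_mat n (map_vec complex_of_real g) (map_vec complex_of_real f)"
    using g f by (intro eq_matI) (auto simp: rank_one_mat_def)
  moreover have "hinner (map_vec complex_of_real g) (map_vec complex_of_real f) = of_real (hinner g f)"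
    using g f by (simp add: hinner_def)
  ultimately show ?thesis
    unfolding real_spectral_radius_def using spectral_radius_rank_one[OF n] g by simp
qed

lemma erasure_mats_eq_image:
  "erasure_mats n N p = (\<lambda>i. mat N N (\<lambda>(j, k). if j = i \<and> k = i then of_real (weight_num n N p i) else 0)) ` {..<N}"
  unfolding erasure_mats_def by auto

lemma d1p_eq_Max:
  fixes F G :: "nat \<Rightarrow> 'a::hilbert_scalar vec"
  assumes F: "\<forall>i<N. F i \<in> carrier_vec n" and G: "\<forall>i<N. G i \<in> carrier_vec n"
  shows "d1p n N p F G = Max ((\<lambda>i. \<bar>weight_num n N p i\<bar> * hnorm (G i) * hnorm (F i)) ` {..<N})"
  unfolding d1p_def erasure_mats_eq_image image_image using F G
  by (intro arg_cong[where f = Max] image_cong refl)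
    (simp add: erasure_term_eq_rank_one op_norm_rank_one hnorm_smult)

lemma R1p_eq_Max:
  fixes F G :: "nat \<Rightarrow> 'a::hilbert_scalar vec"
  assumes F: "\<forall>i<N. F i \<in> carrier_vec n" and G: "\<forall>i<N. G i \<in> carrier_vec n"
    and rho: "\<And>g f. g \<in> carrier_vec n \<Longrightarrow> f \<in> carrier_vec n \<Longrightarrow> rho (rank_one_mat n g f) = norm (hinner g f)"
  shows "R1p rho n N p F G = Max ((\<lambda>i. \<bar>weight_num n N p i\<bar> * norm (hinner (G i) (F i))) ` {..<N})"
  unfolding R1p_def erasure_mats_eq_image image_image using F G
  by (intro arg_cong[where f = Max] image_cong refl)
    (simp add: erasure_term_eq_rank_one rho hinner_smult_left norm_mult)

section \<open>Perturbing the canonical dual\<close>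

lemma norm_affine_comb_sq:
  fixes a b :: "'a::hilbert_scalar"
  shows "(norm (a + of_real t * (b - a)))\<^sup>2
    = (1 - t) * (norm a)\<^sup>2 + t * (norm b)\<^sup>2 - t * (1 - t) * (norm (b - a))\<^sup>2"
proof -
  have "(of_real ((norm (a + of_real t * (b - a)))\<^sup>2) :: 'a)
      = (a + of_real t * (b - a)) * (conjugate a + of_real t * (conjugate b - conjugate a))"
    unfolding mult_conjugate_self[symmetric] by (simp add: conjugate_dist_add conjugate_dist_mul conjugate_diff)
  also have "\<dots> = of_real (1 - t) * (a * conjugate a) + of_real t * (b * conjugate b)
      - of_real t * of_real (1 - t) * ((b - a) * (conjugate b - conjugate a))"
    by (simp add: algebra_simps)
  also have "\<dots> = of_real ((1 - t) * (norm a)\<^sup>2 + t * (norm b)\<^sup>2 - t * (1 - t) * (norm (b - a))\<^sup>2)"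
    unfolding of_real_diff of_real_add of_real_mult mult_conjugate_self[symmetric] conjugate_diff ..
  finally show ?thesis by (simp only: of_real_eq_iff)
qed

lemma hnorm_affine_comb_sq:
  fixes f g :: "'a::hilbert_scalar vec"
  assumes f: "f \<in> carrier_vec n" and g: "g \<in> carrier_vec n"
  shows "(hnorm (f + of_real t \<cdot>\<^sub>v (g - f)))\<^sup>2
    = (1 - t) * (hnorm f)\<^sup>2 + t * (hnorm g)\<^sup>2 - t * (1 - t) * (hnorm (g - f))\<^sup>2"
  using f g by (simp add: power2_hnorm norm_affine_comb_sq sum.distrib sum_subtractf sum_distrib_left)

text \<open>Polarization: \<open>\<parallel>g\<parallel>\<^sup>2 + \<parallel>f\<parallel>\<^sup>2 - \<parallel>g - f\<parallel>\<^sup>2 = 2 Re \<langle>g, f\<rangle> \<le> 2 |\<langle>g, f\<rangle>|\<close>.\<close>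
lemma hnorm_diff_sq_gt:
  fixes f g :: "'a::hilbert_scalar vec"
  assumes f: "f \<in> carrier_vec n" and g: "g \<in> carrier_vec n" and less: "norm (hinner g f) < (hnorm f)\<^sup>2"
  shows "(hnorm g)\<^sup>2 - (hnorm f)\<^sup>2 < (hnorm (g - f))\<^sup>2"
proof -
  define c where "c = (hnorm g)\<^sup>2 + (hnorm f)\<^sup>2 - (hnorm (g - f))\<^sup>2"
  have "(of_real ((hnorm (g - f))\<^sup>2) :: 'a) = hinner (g - f) (g - f)" by (simp add: hinner_self)
  also have "\<dots> = hinner g g + hinner f f - (hinner g f + conjugate (hinner g f))"
    using f g by (simp add: hinner_minus_left[of _ n] hinner_minus_right[of _ n] hinner_commute[of g f])
  finally have re: "of_real c = hinner g f + conjugate (hinner g f)"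
    unfolding c_def by (simp add: hinner_self)
  have "c \<le> norm (of_real c :: 'a)" by simp
  also have "\<dots> \<le> norm (hinner g f) + norm (conjugate (hinner g f))"
    unfolding re by (rule norm_triangle_ineq)
  finally have "c \<le> 2 * norm (hinner g f)" by simp
  then show ?thesis using less unfolding c_def by simp
qed

text \<open>Where the bound \<open>M\<close> is attained, the coefficient \<open>c\<close> of \<open>t\<close> in the squared norm is
  negative, so the norm decreases; elsewhere continuity at \<open>t = 0\<close> suffices.\<close>
lemma eventually_weighted_norm_affine_comb_less:
  fixes f g :: "'a::hilbert_scalar vec"
  assumes f: "f \<in> carrier_vec n" and g: "g \<in> carrier_vec n" and \<alpha>: "0 \<le> \<alpha>"
    and bound: "\<alpha> * (hnorm f)\<^sup>2 \<le> M" and less: "\<alpha> * norm (hinner g f) < M"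
  shows "\<forall>\<^sub>F t in at_right 0. \<alpha> * hnorm f * hnorm (f + of_real t \<cdot>\<^sub>v (g - f)) < M"
proof -
  define x where "x = hnorm f"
  define s where "s = (hnorm (g - f))\<^sup>2"
  define c where "c = (hnorm g)\<^sup>2 - x\<^sup>2 - s"
  have "(hnorm (f + of_real t \<cdot>\<^sub>v (g - f)))\<^sup>2 = x\<^sup>2 + t * c + t\<^sup>2 * s" for t
    unfolding hnorm_affine_comb_sq[OF f g] x_def s_def c_def by (simp add: algebra_simps power2_eq_square)
  moreover have "hnorm h = sqrt ((hnorm h)\<^sup>2)" for h :: "'a vec" by simp
  ultimately have norm_eq: "hnorm (f + of_real t \<cdot>\<^sub>v (g - f)) = sqrt (x\<^sup>2 + t * c + t\<^sup>2 * s)" for t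
    by metis
  show ?thesis
  proof (cases "\<alpha> * x\<^sup>2 < M")
    case True
    have "((\<lambda>t. \<alpha> * x * sqrt (x\<^sup>2 + t * c + t\<^sup>2 * s)) \<longlongrightarrow> \<alpha> * x * sqrt (x\<^sup>2 + 0 * c + 0\<^sup>2 * s)) (at_right 0)"
      by (intro tendsto_intros)
    moreover have "\<alpha> * x * sqrt (x\<^sup>2 + 0 * c + 0\<^sup>2 * s) < M"
      using True by (simp add: x_def power2_eq_square mult.assoc)
    ultimately show ?thesis unfolding norm_eq x_def[symmetric] by (rule order_tendstoD(2))
  next
    case False
    then have max: "\<alpha> * x\<^sup>2 = M" using bound x_def by simp
    then have "\<alpha> * norm (hinner g f) < \<alpha> * x\<^sup>2" using less by simp
    then have "0 < \<alpha>" and lt: "norm (hinner g f) < x\<^sup>2" using \<alpha> by (auto simp: mult_less_cancel_left)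
    have "x \<noteq> 0" using lt by auto
    then have "0 < x" unfolding x_def using hnorm_nonneg[of f] by linarith
    have "c < 0" using hnorm_diff_sq_gt[OF f g lt[unfolded x_def]] unfolding c_def s_def x_def by simp
    have "((\<lambda>t. c + t * s) \<longlongrightarrow> c + 0 * s) (at_right 0)" by (intro tendsto_intros)
    then have "\<forall>\<^sub>F t in at_right 0. c + t * s < 0" using \<open>c < 0\<close> by (auto dest: order_tendstoD(2))
    moreover have "\<forall>\<^sub>F t in at_right 0. 0 < (t::real)" by (simp add: eventually_at_right_less)
    ultimately show ?thesis
    proof eventually_elim
      case (elim t)
      then have "t * (c + t * s) < 0" by (simp add: mult_pos_neg)
      then have "x\<^sup>2 + t * c + t\<^sup>2 * s < x\<^sup>2" by (simp add: algebra_simps power2_eq_square)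
      then have "sqrt (x\<^sup>2 + t * c + t\<^sup>2 * s) < sqrt (x\<^sup>2)" by (simp only: real_sqrt_less_iff)
      then have "sqrt (x\<^sup>2 + t * c + t\<^sup>2 * s) < x" using \<open>0 < x\<close> by simp
      then have "\<alpha> * x * sqrt (x\<^sup>2 + t * c + t\<^sup>2 * s) < \<alpha> * x * x"
        using \<open>0 < \<alpha>\<close> \<open>0 < x\<close> by simp
      then show ?case using max unfolding norm_eq x_def[symmetric] by (simp add: power2_eq_square)
    qed
  qed
qed

lemma exists_dual_weighted_norms_less:
  fixes F G :: "nat \<Rightarrow> 'a::hilbert_scalar vec"
  assumes P: "is_parseval n N F" and G: "is_dual n N F G" and \<alpha>: "\<forall>i<N. 0 \<le> \<alpha> i"
    and bound: "\<forall>i<N. \<alpha> i * (hnorm (F i))\<^sup>2 \<le> M"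
    and less: "\<forall>i<N. \<alpha> i * norm (hinner (G i) (F i)) < M"
  shows "\<exists>G'. is_dual n N F G' \<and> (\<forall>i<N. \<alpha> i * hnorm (F i) * hnorm (G' i) < M)"
proof -
  have F: "\<forall>i<N. F i \<in> carrier_vec n" using P unfolding is_parseval_def by simp
  have "\<forall>\<^sub>F t in at_right 0. \<forall>i\<in>{..<N}. \<alpha> i * hnorm (F i) * hnorm (F i + of_real t \<cdot>\<^sub>v (G i - F i)) < M"
    using F is_dual_carrier[OF G] \<alpha> bound less
    by (intro eventually_ball_finite ballI eventually_weighted_norm_affine_comb_less) auto
  then obtain t where "\<forall>i<N. \<alpha> i * hnorm (F i) * hnorm (F i + of_real t \<cdot>\<^sub>v (G i - F i)) < M"
    using eventually_happens'[OF trivial_limit_at_right_real] by force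
  moreover have "is_dual n N F (\<lambda>i. F i + of_real t \<cdot>\<^sub>v (G i - F i))"
    by (rule is_dual_affine_comb[OF P parseval_is_dual_self[OF P] G])
  ultimately show ?thesis by blast
qed

section \<open>Optimality of the canonical dual\<close>

lemma eq_Inf_iff_le:
  fixes \<phi> :: "'b \<Rightarrow> real"
  assumes C: "P C" and nonneg: "\<And>G. P G \<Longrightarrow> 0 \<le> \<phi> G"
  shows "\<phi> C = Inf {\<phi> G | G. P G} \<longleftrightarrow> (\<forall>G. P G \<longrightarrow> \<phi> C \<le> \<phi> G)"
proof
  assume "\<phi> C = Inf {\<phi> G | G. P G}"
  moreover have "bdd_below {\<phi> G | G. P G}" using nonneg by (intro bdd_belowI[of _ 0]) auto
  ultimately show "\<forall>G. P G \<longrightarrow> \<phi> C \<le> \<phi> G" by (auto intro: cInf_lower)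
next
  assume "\<forall>G. P G \<longrightarrow> \<phi> C \<le> \<phi> G"
  then show "\<phi> C = Inf {\<phi> G | G. P G}" using C by (intro cInf_eq_minimum[symmetric]) auto
qed

lemma Max_image_nonneg:
  fixes a :: "nat \<Rightarrow> real"
  assumes "0 < N" and "\<And>i. 0 \<le> a i"
  shows "0 \<le> Max (a ` {..<N})"
proof -
  have "a 0 \<le> Max (a ` {..<N})" using assms(1) by (intro Max_ge) auto
  then show ?thesis using assms(2)[of 0] by linarith
qed

lemma all_duals_Max_norm_ge_iff_Max_inner_ge:
  fixes F :: "nat \<Rightarrow> 'a::hilbert_scalar vec"
  assumes N: "0 < N" and P: "is_parseval n N F" and \<alpha>: "\<forall>i<N. 0 \<le> \<alpha> i"
    and M: "M = Max ((\<lambda>i. \<alpha> i * (hnorm (F i))\<^sup>2) ` {..<N})"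
  shows "(\<forall>G. is_dual n N F G \<longrightarrow> M \<le> Max ((\<lambda>i. \<alpha> i * hnorm (G i) * hnorm (F i)) ` {..<N}))
     \<longleftrightarrow> (\<forall>G. is_dual n N F G \<longrightarrow> M \<le> Max ((\<lambda>i. \<alpha> i * norm (hinner (G i) (F i))) ` {..<N}))"
    (is "(\<forall>G. _ \<longrightarrow> M \<le> ?d G) \<longleftrightarrow> (\<forall>G. _ \<longrightarrow> M \<le> ?r G)")
proof
  assume "\<forall>G. is_dual n N F G \<longrightarrow> M \<le> ?r G"
  moreover have "?r G \<le> ?d G" if G: "is_dual n N F G" for G
  proof -
    have "\<alpha> i * norm (hinner (G i) (F i)) \<le> \<alpha> i * hnorm (G i) * hnorm (F i)" if "i < N" for i
    proof -
      have "norm (hinner (G i) (F i)) \<le> hnorm (G i) * hnorm (F i)"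
        using that P is_dual_carrier[OF G that] unfolding is_parseval_def by (intro norm_hinner_le) auto
      then show ?thesis using that \<alpha> by (simp add: mult.assoc mult_left_mono)
    qed
    then show ?thesis
      using N by (intro Max.boundedI) (auto intro: order.trans[OF _ Max_ge])
  qed
  ultimately show "\<forall>G. is_dual n N F G \<longrightarrow> M \<le> ?d G" by (meson order.trans)
next
  assume opt: "\<forall>G. is_dual n N F G \<longrightarrow> M \<le> ?d G"
  show "\<forall>G. is_dual n N F G \<longrightarrow> M \<le> ?r G"
  proof (intro allI impI leI notI)
    fix G assume G: "is_dual n N F G" and "?r G < M"
    then have "\<forall>i<N. \<alpha> i * norm (hinner (G i) (F i)) < M" using N by (subst (asm) Max_less_iff) auto
    moreover have "\<forall>i<N. \<alpha> i * (hnorm (F i))\<^sup>2 \<le> M" unfolding M by simp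
    ultimately obtain G' where "is_dual n N F G'" and "\<forall>i<N. \<alpha> i * hnorm (F i) * hnorm (G' i) < M"
      using exists_dual_weighted_norms_less[OF P G \<alpha>] by blast
    then have "?d G' < M" using N by (subst Max_less_iff) (auto simp: mult_ac)
    with opt \<open>is_dual n N F G'\<close> show False by fastforce
  qed
qed

theorem canonical_dual_optimal_iff_spectrally_optimal:
  fixes F :: "nat \<Rightarrow> 'a::hilbert_scalar vec"
  assumes N: "0 < N" and P: "is_parseval n N F"
    and rho: "\<And>g f. g \<in> carrier_vec n \<Longrightarrow> f \<in> carrier_vec n \<Longrightarrow> rho (rank_one_mat n g f) = norm (hinner g f)"
  shows "prob_optimal_dual n N p F (canonical_dual n N F) \<longleftrightarrow>
    prob_spec_optimal_dual rho n N p F (canonical_dual n N F)"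
proof -
  define \<alpha> where "\<alpha> i = \<bar>weight_num n N p i\<bar>" for i
  define M where "M = Max ((\<lambda>i. \<alpha> i * (hnorm (F i))\<^sup>2) ` {..<N})"
  have F: "\<forall>i<N. F i \<in> carrier_vec n" using P unfolding is_parseval_def by simp
  have C: "canonical_dual n N F i = F i" if "i < N" for i using canonical_dual_parseval[OF P that] .
  have FF: "is_dual n N F (canonical_dual n N F)"
    using is_dual_cong[of N "canonical_dual n N F" F n F] C parseval_is_dual_self[OF P] by simp
  have d: "d1p n N p F G = Max ((\<lambda>i. \<alpha> i * hnorm (G i) * hnorm (F i)) ` {..<N})"
    if "is_dual n N F G" for G
    unfolding \<alpha>_def using d1p_eq_Max[OF F] is_dual_carrier[OF that] by blast
  have r: "R1p rho n N p F G = Max ((\<lambda>i. \<alpha> i * norm (hinner (G i) (F i))) ` {..<N})"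
    if "is_dual n N F G" for G
    unfolding \<alpha>_def using R1p_eq_Max[OF F _ rho] is_dual_carrier[OF that] by blast
  have "d1p n N p F (canonical_dual n N F) = M"
    unfolding d[OF FF] M_def using C
    by (intro arg_cong[where f = Max] image_cong) (auto simp: power2_eq_square mult.assoc)
  moreover have "R1p rho n N p F (canonical_dual n N F) = M"
    unfolding r[OF FF] M_def using C
    by (intro arg_cong[where f = Max] image_cong) (auto simp: hinner_self norm_power)
  moreover have "prob_optimal_dual n N p F (canonical_dual n N F)
      \<longleftrightarrow> (\<forall>G. is_dual n N F G \<longrightarrow> d1p n N p F (canonical_dual n N F) \<le> d1p n N p F G)"
    unfolding prob_optimal_dual_def using FF eq_Inf_iff_le[of "is_dual n N F" _ "d1p n N p F"]
    by (simp add: d \<alpha>_def Max_image_nonneg N)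
  moreover have "prob_spec_optimal_dual rho n N p F (canonical_dual n N F)
      \<longleftrightarrow> (\<forall>G. is_dual n N F G \<longrightarrow> R1p rho n N p F (canonical_dual n N F) \<le> R1p rho n N p F G)"
    unfolding prob_spec_optimal_dual_def using FF eq_Inf_iff_le[of "is_dual n N F" _ "R1p rho n N p F"]
    by (simp add: r \<alpha>_def Max_image_nonneg N)
  ultimately show ?thesis
    using all_duals_Max_norm_ge_iff_Max_inner_ge[OF N P _ M_def] d r by (simp add: \<alpha>_def)
qed

theorem theorem4p2:
  shows "(\<forall>(n::nat) (N::nat) (F :: nat \<Rightarrow> complex vec) (p :: nat \<Rightarrow> real).
            0 < n \<longrightarrow> n \<le> N \<longrightarrow> is_parseval n N F \<longrightarrow> is_prob_seq N p \<longrightarrow>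
            (\<forall>i<N. (\<Sum>j<N. p j) - p i \<noteq> 0) \<longrightarrow>
            (prob_optimal_dual n N p F (canonical_dual n N F) \<longleftrightarrow>
             prob_spec_optimal_dual spectral_radius n N p F (canonical_dual n N F)))
       \<and> (\<forall>(n::nat) (N::nat) (F :: nat \<Rightarrow> real vec) (p :: nat \<Rightarrow> real).
            0 < n \<longrightarrow> n \<le> N \<longrightarrow> is_parseval n N F \<longrightarrow> is_prob_seq N p \<longrightarrow>
            (\<forall>i<N. (\<Sum>j<N. p j) - p i \<noteq> 0) \<longrightarrow>
            (prob_optimal_dual n N p F (canonical_dual n N F) \<longleftrightarrow>
             prob_spec_optimal_dual real_spectral_radius n N p F (canonical_dual n N F)))"
proof (intro conjI allI impI)
  fix n N :: nat and F :: "nat \<Rightarrow> complex vec" and p :: "nat \<Rightarrow> real"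
  assume n: "0 < n" "n \<le> N" and P: "is_parseval n N F"
  show "prob_optimal_dual n N p F (canonical_dual n N F) \<longleftrightarrow>
      prob_spec_optimal_dual spectral_radius n N p F (canonical_dual n N F)"
    using n by (intro canonical_dual_optimal_iff_spectrally_optimal[OF _ P])
      (simp_all add: spectral_radius_rank_one)
next
  fix n N :: nat and F :: "nat \<Rightarrow> real vec" and p :: "nat \<Rightarrow> real"
  assume n: "0 < n" "n \<le> N" and P: "is_parseval n N F"
  show "prob_optimal_dual n N p F (canonical_dual n N F) \<longleftrightarrow>
      prob_spec_optimal_dual real_spectral_radius n N p F (canonical_dual n N F)"
    using n by (intro canonical_dual_optimal_iff_spectrally_optimal[OF _ P])
      (simp_all add: real_spectral_radius_rank_one)
qed

end
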